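(* Consider a POMDP with finite state space $\mathcal S$, finite action space $\mathcal A$, finite observation space $\mathcal Y$, initial state $s_1\sim\rho$, joint transition kernel $P(s',y'\mid s,a)$, reward $R_t=r(s_t,a_t)\in[0,R_{\max}]$ and discount factor $\gamma\in[0,1)$. Let $\mathcal Z$ be a finite agent-state space with update $z_{t+1}=\phi(z_t,y_{t+1},a_t)$ and let $\sigma_t:h_t\mapsto z_t$ be the map from histories $h_t=(y_{1:t},a_{1:t-1})$ to agent states obtained by unrolling $\phi$ (with $\sigma_1(h_1)=\phi(z_0,y_1,a_0)$ for a given initial agent state $z_0$ and dummy action $a_0$, and $\sigma_{t+1}(h_{t+1})=\phi(\sigma_t(h_t),y_{t+1},a_t)$). Fix $L\ge1$, write $[t]:=t\bmod L$, $\mathcal L:=\{0,\dots,L-1\}$. Let $\mu=(\mu^0,\dots,\mu^{L-1})$ be a periodic agent-state based behavior policy ($a_t\sim\mu^{[t]}(\cdot\mid z_t)$) such that the induced Markov chain $\{(S_t,Y_t,Z_t,A_t)\}_{t\ge1}$ converges to a cyclic limiting distribution $(\zeta^0_\mu,\dots,\zeta^{L-1}_\mu)$ (for each $\ell$, the law of $(S_t,Y_t,Z_t,A_t)$ converges to $\zeta^\ell_\mu$ along $t\equiv\ell\pmod L$) with $\sum_{(s,y)}\zeta^\ell_\mu(s,y,z,a)>0$ for all $(\ell,z,a)$. Define $r^\ell_\mu(z,a):=\sum_s r(s,a)\zeta^\ell_\mu(s\mid z)$ and $P^\ell_\mu(z'\mid z,a):=\sum_{(s,y')}\mathbf 1_{\{z'=\phi(z,y',a)\}}P(y'\mid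 s,a)\zeta^\ell_\mu(s\mid z)$, let $(Q^0_\mu,\dots,Q^{L-1}_\mu)$ be the unique solution of $Q^\ell_\mu(z,a)=r^\ell_\mu(z,a)+\gamma\sum_{z'}P^\ell_\mu(z'\mid z,a)\max_{a'}Q^{[\ell+1]}_\mu(z',a')$ for all $\ell,z,a$, let $V^\ell_\mu(z):=\max_{a}Q^\ell_\mu(z,a)$, let $\pi^\ell_\mu(z)\in\arg\max_aQ^\ell_\mu(z,a)$, and let $\vec\pi_\mu$ be the history-dependent policy $\vec\pi_{\mu,t}(h_t):=\pi^{[t]}_\mu(\sigma_t(h_t))$. Let $\mathfrak F$ be a convex and balanced set of real-valued functions on $\mathcal Z$, with integral probability metric $d_{\mathfrak F}$ and Minkowski functional $\rho_{\mathfrak F}$. For $\ell\in\mathcal L$ and $t\ge1$, let $\mathcal T(t,\ell):=\{\tau\ge t:[\tau]=\ell\}$ and $$\varepsilon^\ell_t:=\sup_{\tau\in\mathcal T(t,\ell)}\sup_{h_\tau,a_\tau}\Big|\mathbb E[R_\tau\mid h_\tau,a_\tau]-\sum_{s\in\mathcal S}r(s,a_\tau)\zeta^\ell_\mu(s\mid\sigma_\tau(h_\tau),a_\tau)\Big|,$$ $$\delta^\ell_t:=\sup_{\tau\in\mathcal T(t,\ell)}\sup_{h_\tau,a_\tau}d_{\mathfrak F}\Big(\Pr(Z_{\tau+1}=\cdot\mid h_\tau,a_\tau),\,P^\ell_\mu(\cdot\mid\sigma_\tau(h_\tau),a_\tau)\Big).$$ Then for every $t\ge1$, $$\sup_{h_t}\big[V^\star_t(h_t)-V^{\vec\pi_\mu}_t(h_t)\big]\le\frac{2}{1-\gamma^L}\sum_{\ell\in\mathcal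 L}\gamma^\ell\Big[\varepsilon^{[t+\ell]}_{t+\ell}+\gamma\,\delta^{[t+\ell]}_{t+\ell}\,\rho_{\mathfrak F}\big(V^{[t+\ell+1]}_\mu\big)\Big].$$
   Context: $P(y'\mid s,a):=\sum_{s'}P(s',y'\mid s,a)$. Marginals/conditionals of $\zeta^\ell_\mu$ use the same symbol, e.g. $\zeta^\ell_\mu(s\mid z)=\zeta^\ell_\mu(s,z)/\zeta^\ell_\mu(z)$ and $\zeta^\ell_\mu(s\mid z,a)=\zeta^\ell_\mu(s,z,a)/\zeta^\ell_\mu(z,a)$. For a history-dependent (possibly randomized) policy $\vec\pi$, $V^{\vec\pi}_t(h_t):=\mathbb E^{\vec\pi}\big[\sum_{\tau=t}^\infty\gamma^\tau R_\tau\mid h_t\big]$, and $V^\star_t(h_t):=\sup_{\vec\pi}V^{\vec\pi}_t(h_t)$, the supremum being over all history-dependent policies. $\mathfrak F$ balanced means $af\in\mathfrak F$ whenever $f\in\mathfrak F$ and $|a|\le1$. For probability measures $\xi_1,\xi_2$ on $\mathcal Z$, $d_{\mathfrak F}(\xi_1,\xi_2):=\sup_{f\in\mathfrak F}|\int f\,d\xi_1-\int f\,d\xi_2|$; for $f:\mathcal Z\to\mathbb R$, $\rho_{\mathfrak F}(f):=\inf\{\rho>0: f/\rho\in\mathfrak F\}$ (equal to $\infty$ if no such $\rho$ exists). *)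

theory Defs
  imports "HOL-Analysis.Analysis" "HOL-Library.Extended_Real"
begin

text \<open>Finite POMDP with states 's, actions 'a, observations 'y, agent states 'z.
  rho s y : joint initial law of (S_1, Y_1);  P s a s' y : P(s',y' | s,a);  r s a : reward.\<close>

text \<open>A history h_t = (y_1, [(a_1,y_2), ..., (a_{t-1},y_t)]).\<close>
type_synonym ('y,'a) hist = "'y \<times> ('a \<times> 'y) list"

definition hist_len :: "('y,'a) hist \<Rightarrow> nat" where
  "hist_len h = Suc (length (snd h))"

definition hext :: "('y,'a) hist \<Rightarrow> 'a \<Rightarrow> 'y \<Rightarrow> ('y,'a) hist" where
  "hext h a y = (fst h, snd h @ [(a, y)])"

definition agent_state :: "('z \<Rightarrow> 'y \<Rightarrow> 'a \<Rightarrow> 'z) \<Rightarrow> 'z \<Rightarrow> 'a \<Rightarrow> ('y,'a) hist \<Rightarrow> 'z" where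
  "agent_state \<phi> z0 a0 h = foldl (\<lambda>z (a, y). \<phi> z y a) (\<phi> z0 (fst h) a0) (snd h)"

text \<open>Unnormalised forward weights: Pr(S_t = s, Y_{1:t} = y_{1:t}) with the actions of the
  history fixed (policy factors cancel in the conditional law given h_t).\<close>
definition fwd :: "('s::finite \<Rightarrow> 'y \<Rightarrow> real) \<Rightarrow> ('s \<Rightarrow> 'a \<Rightarrow> 's \<Rightarrow> 'y \<Rightarrow> real)
    \<Rightarrow> ('y,'a) hist \<Rightarrow> 's \<Rightarrow> real" where
  "fwd \<rho> P h = foldl (\<lambda>w (a, y). \<lambda>s'. \<Sum>s\<in>UNIV. w s * P s a s' y) (\<lambda>s. \<rho> s (fst h)) (snd h)"

text \<open>A history of length t that has positive probability (under some / any fully mixing policy).\<close>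
definition feasible :: "('s::finite \<Rightarrow> 'y \<Rightarrow> real) \<Rightarrow> ('s \<Rightarrow> 'a \<Rightarrow> 's \<Rightarrow> 'y \<Rightarrow> real)
    \<Rightarrow> nat \<Rightarrow> ('y,'a) hist \<Rightarrow> bool" where
  "feasible \<rho> P t h \<longleftrightarrow> hist_len h = t \<and> (\<Sum>s\<in>UNIV. fwd \<rho> P h s) > 0"

definition belief :: "('s::finite \<Rightarrow> 'y \<Rightarrow> real) \<Rightarrow> ('s \<Rightarrow> 'a \<Rightarrow> 's \<Rightarrow> 'y \<Rightarrow> real)
    \<Rightarrow> ('y,'a) hist \<Rightarrow> 's \<Rightarrow> real" where
  "belief \<rho> P h s = fwd \<rho> P h s / (\<Sum>s'\<in>UNIV. fwd \<rho> P h s')"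

text \<open>History-dependent randomised policies: pi t h a = probability of action a at time t
  given history h.\<close>
definition is_policy :: "(nat \<Rightarrow> ('y,'a::finite) hist \<Rightarrow> 'a \<Rightarrow> real) \<Rightarrow> bool" where
  "is_policy \<pi> \<longleftrightarrow> (\<forall>t h a. 0 \<le> \<pi> t h a) \<and> (\<forall>t h. (\<Sum>a\<in>UNIV. \<pi> t h a) = 1)"

text \<open>disc_ret P r gamma pi n t h w: expectation of sum_{tau=t}^{t+n-1} gamma^tau R_tau,
  starting at history h with (unnormalised) state weights w for S_t, under policy pi.\<close>
fun disc_ret :: "('s::finite \<Rightarrow> 'a::finite \<Rightarrow> 's \<Rightarrow> 'y::finite \<Rightarrow> real) \<Rightarrow> ('s \<Rightarrow> 'a \<Rightarrow> real) \<Rightarrow> real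
    \<Rightarrow> (nat \<Rightarrow> ('y,'a) hist \<Rightarrow> 'a \<Rightarrow> real) \<Rightarrow> nat \<Rightarrow> nat \<Rightarrow> ('y,'a) hist \<Rightarrow> ('s \<Rightarrow> real) \<Rightarrow> real" where
  "disc_ret P r \<gamma> \<pi> 0 t h w = 0"
| "disc_ret P r \<gamma> \<pi> (Suc n) t h w =
     (\<Sum>a\<in>UNIV. \<pi> t h a * (\<gamma> ^ t * (\<Sum>s\<in>UNIV. w s * r s a)
        + (\<Sum>y'\<in>UNIV. disc_ret P r \<gamma> \<pi> n (Suc t) (hext h a y') (\<lambda>s'. \<Sum>s\<in>UNIV. w s * P s a s' y'))))"

definition value_fun :: "('s::finite \<Rightarrow> 'y::finite \<Rightarrow> real) \<Rightarrow> ('s \<Rightarrow> 'a::finite \<Rightarrow> 's \<Rightarrow> 'y \<Rightarrow> real)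
    \<Rightarrow> ('s \<Rightarrow> 'a \<Rightarrow> real) \<Rightarrow> real \<Rightarrow> (nat \<Rightarrow> ('y,'a) hist \<Rightarrow> 'a \<Rightarrow> real) \<Rightarrow> nat \<Rightarrow> ('y,'a) hist \<Rightarrow> real" where
  "value_fun \<rho> P r \<gamma> \<pi> t h = lim (\<lambda>n. disc_ret P r \<gamma> \<pi> n t h (belief \<rho> P h))"

definition opt_value :: "('s::finite \<Rightarrow> 'y::finite \<Rightarrow> real) \<Rightarrow> ('s \<Rightarrow> 'a::finite \<Rightarrow> 's \<Rightarrow> 'y \<Rightarrow> real)
    \<Rightarrow> ('s \<Rightarrow> 'a \<Rightarrow> real) \<Rightarrow> real \<Rightarrow> nat \<Rightarrow> ('y,'a) hist \<Rightarrow> real" where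
  "opt_value \<rho> P r \<gamma> t h = (SUP \<pi>\<in>{\<pi>. is_policy \<pi>}. value_fun \<rho> P r \<gamma> \<pi> t h)"

definition cond_reward :: "('s::finite \<Rightarrow> 'y \<Rightarrow> real) \<Rightarrow> ('s \<Rightarrow> 'a \<Rightarrow> 's \<Rightarrow> 'y \<Rightarrow> real)
    \<Rightarrow> ('s \<Rightarrow> 'a \<Rightarrow> real) \<Rightarrow> ('y,'a) hist \<Rightarrow> 'a \<Rightarrow> real" where
  "cond_reward \<rho> P r h a = (\<Sum>s\<in>UNIV. belief \<rho> P h s * r s a)"

definition next_agent_dist :: "('s::finite \<Rightarrow> 'y::finite \<Rightarrow> real) \<Rightarrow> ('s \<Rightarrow> 'a \<Rightarrow> 's \<Rightarrow> 'y \<Rightarrow> real)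
    \<Rightarrow> ('z \<Rightarrow> 'y \<Rightarrow> 'a \<Rightarrow> 'z) \<Rightarrow> 'z \<Rightarrow> 'a \<Rightarrow> ('y,'a) hist \<Rightarrow> 'a \<Rightarrow> 'z \<Rightarrow> real" where
  "next_agent_dist \<rho> P \<phi> z0 a0 h a z' =
     (\<Sum>s\<in>UNIV. \<Sum>s'\<in>UNIV. \<Sum>y'\<in>UNIV. belief \<rho> P h s * P s a s' y'
        * (if z' = \<phi> (agent_state \<phi> z0 a0 h) y' a then 1 else 0))"

text \<open>Law of (S_t, Y_t, Z_t, A_t) under the periodic agent-state policy mu (index t \<ge> 1;
  the value at t = 0 is an irrelevant dummy).\<close>
fun chain_law :: "('s::finite \<Rightarrow> 'y::finite \<Rightarrow> real) \<Rightarrow> ('s \<Rightarrow> 'a::finite \<Rightarrow> 's \<Rightarrow> 'y \<Rightarrow> real)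
    \<Rightarrow> ('z::finite \<Rightarrow> 'y \<Rightarrow> 'a \<Rightarrow> 'z) \<Rightarrow> 'z \<Rightarrow> 'a \<Rightarrow> nat \<Rightarrow> (nat \<Rightarrow> 'z \<Rightarrow> 'a \<Rightarrow> real)
    \<Rightarrow> nat \<Rightarrow> 's \<Rightarrow> 'y \<Rightarrow> 'z \<Rightarrow> 'a \<Rightarrow> real" where
  "chain_law \<rho> P \<phi> z0 a0 L \<mu> 0 = (\<lambda>s y z a. 0)"
| "chain_law \<rho> P \<phi> z0 a0 L \<mu> (Suc t) =
     (if t = 0 then
        (\<lambda>s y z a. \<rho> s y * (if z = \<phi> z0 y a0 then 1 else 0) * \<mu> (1 mod L) z a)
      else
        (\<lambda>s' y' z' a'. \<Sum>s\<in>UNIV. \<Sum>y\<in>UNIV. \<Sum>z\<in>UNIV. \<Sum>a\<in>UNIV. chain_law \<rho> P \<phi> z0 a0 L \<mu> t s y z a * P s a s' y'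
            * (if z' = \<phi> z y' a then 1 else 0) * \<mu> (Suc t mod L) z' a'))"

definition zeta_z :: "(nat \<Rightarrow> 's::finite \<Rightarrow> 'y::finite \<Rightarrow> 'z \<Rightarrow> 'a::finite \<Rightarrow> real) \<Rightarrow> nat \<Rightarrow> 'z \<Rightarrow> real" where
  "zeta_z \<zeta> l z = (\<Sum>s\<in>UNIV. \<Sum>y\<in>UNIV. \<Sum>a\<in>UNIV. \<zeta> l s y z a)"

definition zeta_s_given_z :: "(nat \<Rightarrow> 's::finite \<Rightarrow> 'y::finite \<Rightarrow> 'z \<Rightarrow> 'a::finite \<Rightarrow> real) \<Rightarrow> nat \<Rightarrow> 's \<Rightarrow> 'z \<Rightarrow> real" where
  "zeta_s_given_z \<zeta> l s z = (\<Sum>y\<in>UNIV. \<Sum>a\<in>UNIV. \<zeta> l s y z a) / zeta_z \<zeta> l z"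

definition zeta_s_given_za :: "(nat \<Rightarrow> 's::finite \<Rightarrow> 'y::finite \<Rightarrow> 'z \<Rightarrow> 'a \<Rightarrow> real) \<Rightarrow> nat \<Rightarrow> 's \<Rightarrow> 'z \<Rightarrow> 'a \<Rightarrow> real" where
  "zeta_s_given_za \<zeta> l s z a = (\<Sum>y\<in>UNIV. \<zeta> l s y z a) / (\<Sum>s'\<in>UNIV. \<Sum>y\<in>UNIV. \<zeta> l s' y z a)"

definition r_mu :: "('s::finite \<Rightarrow> 'a::finite \<Rightarrow> real) \<Rightarrow> (nat \<Rightarrow> 's \<Rightarrow> 'y::finite \<Rightarrow> 'z \<Rightarrow> 'a \<Rightarrow> real)
    \<Rightarrow> nat \<Rightarrow> 'z \<Rightarrow> 'a \<Rightarrow> real" where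
  "r_mu r \<zeta> l z a = (\<Sum>s\<in>UNIV. r s a * zeta_s_given_z \<zeta> l s z)"

definition obs_prob :: "('s::finite \<Rightarrow> 'a \<Rightarrow> 's \<Rightarrow> 'y \<Rightarrow> real) \<Rightarrow> 's \<Rightarrow> 'a \<Rightarrow> 'y \<Rightarrow> real" where
  "obs_prob P s a y' = (\<Sum>s'\<in>UNIV. P s a s' y')"

definition P_mu :: "('s::finite \<Rightarrow> 'a::finite \<Rightarrow> 's \<Rightarrow> 'y::finite \<Rightarrow> real) \<Rightarrow> ('z \<Rightarrow> 'y \<Rightarrow> 'a \<Rightarrow> 'z)
    \<Rightarrow> (nat \<Rightarrow> 's \<Rightarrow> 'y \<Rightarrow> 'z \<Rightarrow> 'a \<Rightarrow> real) \<Rightarrow> nat \<Rightarrow> 'z \<Rightarrow> 'a \<Rightarrow> 'z \<Rightarrow> real" where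
  "P_mu P \<phi> \<zeta> l z a z' =
     (\<Sum>s\<in>UNIV. \<Sum>y'\<in>UNIV. (if z' = \<phi> z y' a then 1 else 0) * obs_prob P s a y' * zeta_s_given_z \<zeta> l s z)"

definition V_mu :: "(nat \<Rightarrow> 'z \<Rightarrow> 'a::finite \<Rightarrow> real) \<Rightarrow> nat \<Rightarrow> 'z \<Rightarrow> real" where
  "V_mu Q l z = Max (range (Q l z))"

definition hist_policy_of :: "('z \<Rightarrow> 'y \<Rightarrow> 'a \<Rightarrow> 'z) \<Rightarrow> 'z \<Rightarrow> 'a \<Rightarrow> nat \<Rightarrow> (nat \<Rightarrow> 'z \<Rightarrow> 'a)
    \<Rightarrow> nat \<Rightarrow> ('y,'a) hist \<Rightarrow> 'a \<Rightarrow> real" where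
  "hist_policy_of \<phi> z0 a0 L \<pi>\<mu> t h a = (if a = \<pi>\<mu> (t mod L) (agent_state \<phi> z0 a0 h) then 1 else 0)"

definition ipm :: "('z::finite \<Rightarrow> real) set \<Rightarrow> ('z \<Rightarrow> real) \<Rightarrow> ('z \<Rightarrow> real) \<Rightarrow> ereal" where
  "ipm F \<xi>1 \<xi>2 = (SUP f\<in>F. ereal \<bar>(\<Sum>z\<in>UNIV. f z * \<xi>1 z) - (\<Sum>z\<in>UNIV. f z * \<xi>2 z)\<bar>)"

definition minkowski :: "('z \<Rightarrow> real) set \<Rightarrow> ('z \<Rightarrow> real) \<Rightarrow> ereal" where
  "minkowski F f = (INF c\<in>{c::real. c > 0 \<and> (\<lambda>z. f z / c) \<in> F}. ereal c)"

definition conv_balanced :: "('z \<Rightarrow> real) set \<Rightarrow> bool" where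
  "conv_balanced F \<longleftrightarrow>
     (\<forall>f\<in>F. \<forall>g\<in>F. \<forall>u::real. 0 \<le> u \<and> u \<le> 1 \<longrightarrow> (\<lambda>z. u * f z + (1 - u) * g z) \<in> F)
   \<and> (\<forall>f\<in>F. \<forall>c::real. \<bar>c\<bar> \<le> 1 \<longrightarrow> (\<lambda>z. c * f z) \<in> F)"

definition eps_err :: "('s::finite \<Rightarrow> 'y::finite \<Rightarrow> real) \<Rightarrow> ('s \<Rightarrow> 'a::finite \<Rightarrow> 's \<Rightarrow> 'y \<Rightarrow> real)
    \<Rightarrow> ('s \<Rightarrow> 'a \<Rightarrow> real) \<Rightarrow> ('z \<Rightarrow> 'y \<Rightarrow> 'a \<Rightarrow> 'z) \<Rightarrow> 'z \<Rightarrow> 'a \<Rightarrow> nat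
    \<Rightarrow> (nat \<Rightarrow> 's \<Rightarrow> 'y \<Rightarrow> 'z \<Rightarrow> 'a \<Rightarrow> real) \<Rightarrow> nat \<Rightarrow> nat \<Rightarrow> ereal" where
  "eps_err \<rho> P r \<phi> z0 a0 L \<zeta> l t =
     (SUP \<tau>\<in>{\<tau>. t \<le> \<tau> \<and> \<tau> mod L = l}. SUP h\<in>{h. feasible \<rho> P \<tau> h}. SUP a\<in>UNIV.
        ereal \<bar>cond_reward \<rho> P r h a
               - (\<Sum>s\<in>UNIV. r s a * zeta_s_given_za \<zeta> l s (agent_state \<phi> z0 a0 h) a)\<bar>)"

definition delta_err :: "('s::finite \<Rightarrow> 'y::finite \<Rightarrow> real) \<Rightarrow> ('s \<Rightarrow> 'a::finite \<Rightarrow> 's \<Rightarrow> 'y \<Rightarrow> real)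
    \<Rightarrow> ('z::finite \<Rightarrow> 'y \<Rightarrow> 'a \<Rightarrow> 'z) \<Rightarrow> 'z \<Rightarrow> 'a \<Rightarrow> nat
    \<Rightarrow> (nat \<Rightarrow> 's \<Rightarrow> 'y \<Rightarrow> 'z \<Rightarrow> 'a \<Rightarrow> real) \<Rightarrow> ('z \<Rightarrow> real) set \<Rightarrow> nat \<Rightarrow> nat \<Rightarrow> ereal" where
  "delta_err \<rho> P \<phi> z0 a0 L \<zeta> F l t =
     (SUP \<tau>\<in>{\<tau>. t \<le> \<tau> \<and> \<tau> mod L = l}. SUP h\<in>{h. feasible \<rho> P \<tau> h}. SUP a\<in>UNIV.
        ipm F (next_agent_dist \<rho> P \<phi> z0 a0 h a) (P_mu P \<phi> \<zeta> l (agent_state \<phi> z0 a0 h) a))"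

end

theory Submission
  imports Defs
begin

(*
  The agent-state value W_tau(h) = V_mu^[tau](sigma_tau(h)) satisfies the Bellman equation of the
  POMDP up to the error eps + gamma * delta * rho_F(V) at every time tau >= t.  For the reward this
  is because zeta(s | z, a) = zeta(s | z): the behaviour policy draws a from z alone, so in the
  limit conditioning on a does not change the law of s given z.  For the transition it is because
  integrals of a function f against two laws differ by at most their IPM times rho_F(f).
  Unrolling such an approximate Bellman inequality bounds the return of every policy from above,
  and the return of the policy greedy with respect to Q from below, by gamma^t (W_t(h) +- C),
  where C bounds the discounted sum of the errors.  As the errors are L-periodic in tau,
  C = (sum_{l<L} gamma^l err_l) / (1 - gamma^L) works.
*)

lemma pos_summand_if_pos_sum:
  fixes f :: "'a \<Rightarrow> 'b::linordered_ab_group_add"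
  assumes "0 < sum f A"
  shows "\<exists>x\<in>A. 0 < f x"
  using sum_nonpos[of A f] assms by (meson not_le)

lemma sum_periodic_geometric_le:
  fixes \<gamma> :: real
  assumes "0 \<le> \<gamma>" "\<gamma> < 1" "0 < L" "\<And>l. l < L \<Longrightarrow> 0 \<le> f l"
  shows "(\<Sum>k<n. \<gamma> ^ k * f (k mod L)) \<le> (\<Sum>l<L. \<gamma> ^ l * f l) / (1 - \<gamma> ^ L)"
proof -
  define g where "g k = \<gamma> ^ k * f (k mod L)" for k
  have "(\<Sum>k<n. g k) \<le> (\<Sum>k<L + n. g k)"
    unfolding g_def using assms by (intro sum_mono2) auto
  also have "\<dots> = (\<Sum>k<L. g k) + \<gamma> ^ L * (\<Sum>k<n. g k)"
    by (induction n) (simp_all add: g_def power_add algebra_simps)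
  also have "(\<Sum>k<L. g k) = (\<Sum>l<L. \<gamma> ^ l * f l)"
    by (intro sum.cong) (auto simp: g_def)
  finally have "(\<Sum>k<n. g k) * (1 - \<gamma> ^ L) \<le> (\<Sum>l<L. \<gamma> ^ l * f l)"
    by (simp add: algebra_simps)
  moreover have "\<gamma> ^ L < 1"
    using assms by (simp add: power_less_one_iff)
  ultimately show ?thesis
    unfolding g_def by (simp add: le_divide_eq)
qed

section \<open>Integral probability metrics\<close>

lemma abs_sum_diff_le_mult_ipm:
  fixes F :: "('z::finite \<Rightarrow> real) set"
  assumes ipm: "ipm F \<xi>1 \<xi>2 \<le> ereal d" and c: "0 < c" "(\<lambda>z. f z / c) \<in> F"
  shows "\<bar>(\<Sum>z\<in>UNIV. f z * \<xi>1 z) - (\<Sum>z\<in>UNIV. f z * \<xi>2 z)\<bar> \<le> c * d"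
proof -
  have "(\<Sum>z\<in>UNIV. f z / c * \<xi>1 z) - (\<Sum>z\<in>UNIV. f z / c * \<xi>2 z)
      = ((\<Sum>z\<in>UNIV. f z * \<xi>1 z) - (\<Sum>z\<in>UNIV. f z * \<xi>2 z)) / c"
    by (simp add: sum_divide_distrib diff_divide_distrib)
  moreover have "ereal \<bar>(\<Sum>z\<in>UNIV. f z / c * \<xi>1 z) - (\<Sum>z\<in>UNIV. f z / c * \<xi>2 z)\<bar> \<le> ipm F \<xi>1 \<xi>2"
    unfolding ipm_def by (rule SUP_upper[OF c(2)])
  ultimately have "ereal (\<bar>(\<Sum>z\<in>UNIV. f z * \<xi>1 z) - (\<Sum>z\<in>UNIV. f z * \<xi>2 z)\<bar> / c) \<le> ipm F \<xi>1 \<xi>2"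
    using c by simp
  from order_trans[OF this ipm] show ?thesis
    using c by (simp add: divide_le_eq mult.commute)
qed

lemma abs_sum_diff_le_ipm_mult_minkowski:
  fixes F :: "('z::finite \<Rightarrow> real) set"
  assumes ipm: "ipm F \<xi>1 \<xi>2 \<le> ereal d" and mink: "minkowski F f \<le> ereal m"
  shows "\<bar>(\<Sum>z\<in>UNIV. f z * \<xi>1 z) - (\<Sum>z\<in>UNIV. f z * \<xi>2 z)\<bar> \<le> d * m"
proof -
  define C where "C = {c::real. c > 0 \<and> (\<lambda>z. f z / c) \<in> F}"
  define X where "X = \<bar>(\<Sum>z\<in>UNIV. f z * \<xi>1 z) - (\<Sum>z\<in>UNIV. f z * \<xi>2 z)\<bar>"
  have scaled: "X \<le> c * d" if "c \<in> C" for c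
    using that unfolding X_def C_def by (intro abs_sum_diff_le_mult_ipm[OF ipm]) auto
  have mink_C: "(INF c\<in>C. ereal c) \<le> ereal m"
    using mink unfolding minkowski_def C_def .
  have "C \<noteq> {}"
    using mink_C by (auto simp: top_ereal_def)
  then obtain c0 where c0: "c0 \<in> C"
    by blast
  have "0 \<le> c0 * d"
    using scaled[OF c0] by (simp add: X_def order_trans[OF abs_ge_zero])
  then have "0 \<le> d"
    using c0 by (simp add: C_def zero_le_mult_iff)
  show ?thesis
  proof (cases "d = 0")
    case True
    then show ?thesis
      using scaled[OF c0] by (simp add: X_def)
  next
    case False
    with \<open>0 \<le> d\<close> have "0 < d" by simp
    then have "ereal (X / d) \<le> (INF c\<in>C. ereal c)"
      using scaled by (intro INF_greatest) (simp add: divide_le_eq)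
    from order_trans[OF this mink_C] \<open>0 < d\<close> show ?thesis
      by (simp add: X_def divide_le_eq mult.commute)
  qed
qed

lemma ipm_nonneg: "F \<noteq> {} \<Longrightarrow> 0 \<le> ipm F \<xi>1 \<xi>2"
  unfolding ipm_def by (auto intro: SUP_upper2)

lemma minkowski_nonneg: "0 \<le> minkowski F f"
  unfolding minkowski_def by (auto intro: INF_greatest)

lemma nonempty_if_minkowski_finite: "minkowski F f \<noteq> \<infinity> \<Longrightarrow> F \<noteq> {}"
  by (auto simp: minkowski_def top_ereal_def)

section \<open>Discounted returns of history-dependent policies\<close>

lemma fwd_hext: "fwd \<rho> P (hext h a y) = (\<lambda>s'. \<Sum>s\<in>UNIV. fwd \<rho> P h s * P s a s' y)"
  by (simp add: fwd_def hext_def)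

lemma agent_state_hext: "agent_state \<phi> z0 a0 (hext h a y) = \<phi> (agent_state \<phi> z0 a0 h) y a"
  by (simp add: agent_state_def hext_def)

lemma hist_len_hext: "hist_len (hext h a y) = Suc (hist_len h)"
  by (simp add: hist_len_def hext_def)

lemma disc_ret_fwd_Suc:
  "disc_ret P r \<gamma> \<pi> (Suc n) \<tau> h (fwd \<rho> P h)
     = (\<Sum>a\<in>UNIV. \<pi> \<tau> h a * (\<gamma> ^ \<tau> * (\<Sum>s\<in>UNIV. fwd \<rho> P h s * r s a)
          + (\<Sum>y\<in>UNIV. disc_ret P r \<gamma> \<pi> n (Suc \<tau>) (hext h a y) (fwd \<rho> P (hext h a y)))))"
  by (simp add: fwd_hext)

lemma disc_ret_scale:
  "disc_ret P r \<gamma> \<pi> n t h (\<lambda>s. c * w s) = c * disc_ret P r \<gamma> \<pi> n t h w"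
proof (induction n arbitrary: t h w)
  case 0
  then show ?case by simp
next
  case (Suc n)
  have "(\<lambda>s'. \<Sum>s\<in>UNIV. c * w s * P s a s' y) = (\<lambda>s'. c * (\<Sum>s\<in>UNIV. w s * P s a s' y))" for a y
    by (simp add: sum_distrib_left mult.assoc)
  then show ?case
    by (simp only: disc_ret.simps Suc.IH)
      (simp add: sum_distrib_left sum_distrib_right algebra_simps sum.distrib)
qed

lemma disc_ret_zero: "disc_ret P r \<gamma> \<pi> n t h (\<lambda>s. 0) = 0"
  using disc_ret_scale[where c = 0 and w = "\<lambda>s. 0"] by simp

lemma disc_ret_scale_reward:
  "disc_ret P (\<lambda>s a. c * r s a) \<gamma> \<pi> n t h w = c * disc_ret P r \<gamma> \<pi> n t h w"
  by (induction n arbitrary: t h w) (simp_all add: sum_distrib_left algebra_simps)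

lemma disc_ret_uminus_reward:
  "disc_ret P (\<lambda>s a. - r s a) \<gamma> \<pi> n t h w = - disc_ret P r \<gamma> \<pi> n t h w"
  using disc_ret_scale_reward[of P "-1" r] by simp

lemma cond_reward_uminus:
  "cond_reward \<rho> P (\<lambda>s a. - r s a) h a = - cond_reward \<rho> P r h a"
  by (simp add: cond_reward_def sum_negf)

lemma is_policy_nonneg: "is_policy \<pi> \<Longrightarrow> 0 \<le> \<pi> t h a"
  unfolding is_policy_def by blast

lemma is_policy_sum: "is_policy \<pi> \<Longrightarrow> (\<Sum>a\<in>UNIV. \<pi> t h a) = 1"
  unfolding is_policy_def by blast

lemma disc_ret_mono_horizon:
  assumes "is_policy \<pi>" "\<And>s a. 0 \<le> r s a" "\<And>s a s' y. 0 \<le> P s a s' y" "0 \<le> \<gamma>" "\<And>s. 0 \<le> w s"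
  shows "disc_ret P r \<gamma> \<pi> n t h w \<le> disc_ret P r \<gamma> \<pi> (Suc n) t h w"
  using assms(5)
proof (induction n arbitrary: t h w)
  case 0
  then show ?case
    using assms(2-4) is_policy_nonneg[OF assms(1)] by (simp add: sum_nonneg)
next
  case (Suc n)
  have "disc_ret P r \<gamma> \<pi> n (Suc t) (hext h a y) (\<lambda>s'. \<Sum>s\<in>UNIV. w s * P s a s' y)
      \<le> disc_ret P r \<gamma> \<pi> (Suc n) (Suc t) (hext h a y) (\<lambda>s'. \<Sum>s\<in>UNIV. w s * P s a s' y)" for a y
    using assms(3) Suc.prems by (intro Suc.IH) (simp add: sum_nonneg)
  then show ?case
    using is_policy_nonneg[OF assms(1)]
    by (subst (1 2) disc_ret.simps) (intro sum_mono mult_left_mono add_left_mono; simp)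
qed

section \<open>The cyclic limiting distribution of the behaviour chain\<close>

lemma chain_law_Suc_factor:
  "\<exists>c. \<forall>a. chain_law \<rho> P \<phi> z0 a0 L \<mu> (Suc t) s y z a = c * \<mu> (Suc t mod L) z a"
proof (cases "t = 0")
  case True
  then show ?thesis
    by (intro exI[of _ "\<rho> s y * (if z = \<phi> z0 y a0 then 1 else 0)"]) simp
next
  case False
  then show ?thesis
    by (intro exI[of _ "\<Sum>s0\<in>UNIV. \<Sum>y0\<in>UNIV. \<Sum>z1\<in>UNIV. \<Sum>a1\<in>UNIV.
        chain_law \<rho> P \<phi> z0 a0 L \<mu> t s0 y0 z1 a1 * P s0 a1 s y * (if z = \<phi> z1 y a1 then 1 else 0)"])
      (simp add: sum_distrib_right)
qed

lemma limit_law_factor: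
  assumes "0 < L" "l < L" and \<mu>_sum: "(\<Sum>a\<in>UNIV. \<mu> l z a) = 1"
    and conv: "\<And>a. (\<lambda>k. chain_law \<rho> P \<phi> z0 a0 L \<mu> (l + k * L) s y z a) \<longlonglongrightarrow> \<zeta> l s y z a"
  shows "\<zeta> l s y z a = (\<Sum>a'\<in>UNIV. \<zeta> l s y z a') * \<mu> l z a"
proof -
  let ?c = "\<lambda>k a. chain_law \<rho> P \<phi> z0 a0 L \<mu> (l + k * L) s y z a"
  have "?c k a = (\<Sum>a'\<in>UNIV. ?c k a') * \<mu> l z a" if "1 \<le> k" for k
  proof -
    define t' where "t' = l + k * L - 1"
    have t': "l + k * L = Suc t'"
      using that \<open>0 < L\<close> by (simp add: t'_def)
    have "Suc t' mod L = l"
      using \<open>l < L\<close> by (simp flip: t')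
    moreover obtain c where "\<And>a. chain_law \<rho> P \<phi> z0 a0 L \<mu> (Suc t') s y z a = c * \<mu> (Suc t' mod L) z a"
      using chain_law_Suc_factor by metis
    ultimately show ?thesis
      using \<mu>_sum by (simp add: t' del: chain_law.simps flip: sum_distrib_left)
  qed
  then have "\<forall>\<^sub>F k in sequentially. ?c k a = (\<Sum>a'\<in>UNIV. ?c k a') * \<mu> l z a"
    unfolding eventually_sequentially by blast
  then have "(\<lambda>k. (\<Sum>a'\<in>UNIV. ?c k a') * \<mu> l z a) \<longlonglongrightarrow> \<zeta> l s y z a"
    by (rule Lim_transform_eventually[OF conv[of a]])
  moreover have "(\<lambda>k. (\<Sum>a'\<in>UNIV. ?c k a') * \<mu> l z a) \<longlonglongrightarrow> (\<Sum>a'\<in>UNIV. \<zeta> l s y z a') * \<mu> l z a"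
    by (intro tendsto_mult_right tendsto_sum conv)
  ultimately show ?thesis
    by (rule LIMSEQ_unique)
qed

lemma zeta_s_given_za_eq_zeta_s_given_z:
  assumes factor: "\<And>s y a. \<zeta> l s y z a = (\<Sum>a'\<in>UNIV. \<zeta> l s y z a') * \<mu> z a"
    and pos: "0 < (\<Sum>s\<in>UNIV. \<Sum>y\<in>UNIV. \<zeta> l s y z a)"
  shows "zeta_s_given_za \<zeta> l s z a = zeta_s_given_z \<zeta> l s z"
proof -
  have "(\<Sum>y\<in>UNIV. \<zeta> l s y z a) = (\<Sum>y\<in>UNIV. (\<Sum>a'\<in>UNIV. \<zeta> l s y z a') * \<mu> z a)"
    by (intro sum.cong refl factor)
  also have "\<dots> = (\<Sum>y\<in>UNIV. \<Sum>a'\<in>UNIV. \<zeta> l s y z a') * \<mu> z a"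
    by (rule sum_distrib_right[symmetric])
  finally have num: "(\<Sum>y\<in>UNIV. \<zeta> l s y z a) = (\<Sum>y\<in>UNIV. \<Sum>a'\<in>UNIV. \<zeta> l s y z a') * \<mu> z a" .
  have "(\<Sum>s'\<in>UNIV. \<Sum>y\<in>UNIV. \<zeta> l s' y z a)
      = (\<Sum>s'\<in>UNIV. \<Sum>y\<in>UNIV. (\<Sum>a'\<in>UNIV. \<zeta> l s' y z a') * \<mu> z a)"
    by (intro sum.cong refl factor)
  also have "\<dots> = zeta_z \<zeta> l z * \<mu> z a"
    by (simp add: zeta_z_def sum_distrib_right)
  finally have den: "(\<Sum>s'\<in>UNIV. \<Sum>y\<in>UNIV. \<zeta> l s' y z a) = zeta_z \<zeta> l z * \<mu> z a" .
  have "\<mu> z a \<noteq> 0"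
    using pos den by auto
  then show ?thesis
    unfolding zeta_s_given_za_def zeta_s_given_z_def num den by simp
qed

lemma zeta_s_given_za_eq_of_limit:
  assumes "0 < L" "l < L" and \<mu>_sum: "\<And>z. (\<Sum>a\<in>UNIV. \<mu> l z a) = 1"
    and conv: "\<And>s y z a. (\<lambda>k. chain_law \<rho> P \<phi> z0 a0 L \<mu> (l + k * L) s y z a) \<longlonglongrightarrow> \<zeta> l s y z a"
    and pos: "\<And>z a. 0 < (\<Sum>s\<in>UNIV. \<Sum>y\<in>UNIV. \<zeta> l s y z a)"
  shows "zeta_s_given_za \<zeta> l s z a = zeta_s_given_z \<zeta> l s z"
proof (rule zeta_s_given_za_eq_zeta_s_given_z[where \<mu> = "\<mu> l"])
  show "\<zeta> l s' y z a' = (\<Sum>a''\<in>UNIV. \<zeta> l s' y z a'') * \<mu> l z a'" for s' y a'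
    using \<mu>_sum conv by (rule limit_law_factor[OF assms(1,2)])
qed (rule pos)

lemma Q_le_V_mu: "Q l z a \<le> V_mu Q l z"
  unfolding V_mu_def by (rule Max_ge) auto

lemma reward_error_le_eps_err:
  assumes "t \<le> \<tau>" "\<tau> mod L = l" "feasible \<rho> P \<tau> h"
  shows "ereal \<bar>cond_reward \<rho> P r h a - (\<Sum>s\<in>UNIV. r s a * zeta_s_given_za \<zeta> l s (agent_state \<phi> z0 a0 h) a)\<bar>
    \<le> eps_err \<rho> P r \<phi> z0 a0 L \<zeta> l t"
  unfolding eps_err_def using assms by (intro SUP_upper2[of \<tau>] SUP_upper2[of h] SUP_upper) auto

lemma ipm_le_delta_err:
  assumes "t \<le> \<tau>" "\<tau> mod L = l" "feasible \<rho> P \<tau> h"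
  shows "ipm F (next_agent_dist \<rho> P \<phi> z0 a0 h a) (P_mu P \<phi> \<zeta> l (agent_state \<phi> z0 a0 h) a)
    \<le> delta_err \<rho> P \<phi> z0 a0 L \<zeta> F l t"
  unfolding delta_err_def using assms by (intro SUP_upper2[of \<tau>] SUP_upper2[of h] SUP_upper) auto

section \<open>Approximate Bellman equations in a POMDP\<close>

locale pomdp =
  fixes \<rho> :: "'s::finite \<Rightarrow> 'y::finite \<Rightarrow> real"
    and P :: "'s \<Rightarrow> 'a::finite \<Rightarrow> 's \<Rightarrow> 'y \<Rightarrow> real"
  assumes rho_nonneg: "\<And>s y. 0 \<le> \<rho> s y"
    and rho_sum: "(\<Sum>s\<in>UNIV. \<Sum>y\<in>UNIV. \<rho> s y) = 1"
    and P_nonneg: "\<And>s a s' y. 0 \<le> P s a s' y"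
    and P_sum: "\<And>s a. (\<Sum>s'\<in>UNIV. \<Sum>y\<in>UNIV. P s a s' y) = 1"
begin

abbreviation mass :: "('y, 'a) hist \<Rightarrow> real" where
  "mass h \<equiv> \<Sum>s\<in>UNIV. fwd \<rho> P h s"

lemma fwd_nonneg: "0 \<le> fwd \<rho> P h s"
proof -
  obtain y xs where "h = (y, xs)" by fastforce
  moreover have "0 \<le> fwd \<rho> P (y, xs) s" for s
    by (induction xs arbitrary: s rule: rev_induct)
      (simp_all add: fwd_def case_prod_unfold rho_nonneg P_nonneg sum_nonneg)
  ultimately show ?thesis by simp
qed

lemma mass_nonneg: "0 \<le> mass h"
  by (simp add: fwd_nonneg sum_nonneg)

lemma fwd_eq_0_if_mass_eq_0: "mass h = 0 \<Longrightarrow> fwd \<rho> P h = (\<lambda>s. 0)"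
  by (simp add: fwd_nonneg sum_nonneg_eq_0_iff fun_eq_iff)

lemma sum_obs_prob: "(\<Sum>y\<in>UNIV. obs_prob P s a y) = 1"
  unfolding obs_prob_def using P_sum[of s a] by (subst sum.swap) simp

lemma mass_hext: "mass (hext h a y) = (\<Sum>s\<in>UNIV. fwd \<rho> P h s * obs_prob P s a y)"
  unfolding fwd_hext obs_prob_def sum_distrib_left by (rule sum.swap)

lemma sum_mass_hext: "(\<Sum>y\<in>UNIV. mass (hext h a y)) = mass h"
proof -
  have "(\<Sum>y\<in>UNIV. mass (hext h a y)) = (\<Sum>s\<in>UNIV. fwd \<rho> P h s * (\<Sum>y\<in>UNIV. obs_prob P s a y))"
    unfolding mass_hext sum_distrib_left by (rule sum.swap)
  then show ?thesis
    by (simp add: sum_obs_prob)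
qed

lemma feasible_exists: "1 \<le> t \<Longrightarrow> \<exists>h. feasible \<rho> P t h"
proof (induction t rule: dec_induct)
  case base
  have "(\<Sum>y\<in>UNIV. \<Sum>s\<in>UNIV. \<rho> s y) = 1"
    by (subst sum.swap) (rule rho_sum)
  then obtain y where "0 < (\<Sum>s\<in>UNIV. \<rho> s y)"
    using pos_summand_if_pos_sum[of "\<lambda>y. \<Sum>s\<in>UNIV. \<rho> s y" UNIV] by auto
  then have "feasible \<rho> P 1 (y, [])"
    by (simp add: feasible_def hist_len_def fwd_def)
  then show ?case ..
next
  case (step t)
  then obtain h and a :: 'a where h: "feasible \<rho> P t h" by blast
  then have "0 < (\<Sum>y\<in>UNIV. mass (hext h a y))"
    by (simp add: sum_mass_hext feasible_def)
  then obtain y where "0 < mass (hext h a y)"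
    using pos_summand_if_pos_sum[of "\<lambda>y. mass (hext h a y)"] by blast
  then have "feasible \<rho> P (Suc t) (hext h a y)"
    using h by (simp add: feasible_def hist_len_hext)
  then show ?case ..
qed

lemma cond_reward_eq: "cond_reward \<rho> P r h a = (\<Sum>s\<in>UNIV. fwd \<rho> P h s * r s a) / mass h"
  by (simp add: cond_reward_def belief_def sum_divide_distrib)

lemma abs_cond_reward_le:
  assumes "\<And>s. \<bar>r s a\<bar> \<le> R" and "0 < mass h"
  shows "\<bar>cond_reward \<rho> P r h a\<bar> \<le> R"
proof -
  have "\<bar>\<Sum>s\<in>UNIV. fwd \<rho> P h s * r s a\<bar> \<le> (\<Sum>s\<in>UNIV. fwd \<rho> P h s * R)"
    using assms(1) fwd_nonneg
    by (intro order_trans[OF sum_abs] sum_mono) (simp add: abs_mult mult_left_mono)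
  also have "\<dots> = R * mass h"
    unfolding sum_distrib_right[symmetric] by (rule mult.commute)
  finally show ?thesis
    using assms(2) by (simp add: cond_reward_eq pos_divide_le_eq)
qed

lemma belief_nonneg: "0 \<le> belief \<rho> P h s"
  by (simp add: belief_def fwd_nonneg mass_nonneg)

text \<open>\<open>next_expect g h a\<close> is E[g(h_{t+1}) | h_t = h, a_t = a]: the probability of observing y
  after h and a is \<open>mass (hext h a y) / mass h\<close>.\<close>
definition next_expect :: "(('y, 'a) hist \<Rightarrow> real) \<Rightarrow> ('y, 'a) hist \<Rightarrow> 'a \<Rightarrow> real" where
  "next_expect g h a = (\<Sum>y\<in>UNIV. mass (hext h a y) * g (hext h a y)) / mass h"

lemma next_expect_uminus: "next_expect (\<lambda>h. - g h) h a = - next_expect g h a"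
  by (simp add: next_expect_def sum_negf)

lemma discounted_step_eq:
  assumes "0 < mass h"
  shows "\<gamma> ^ \<tau> * (\<Sum>s\<in>UNIV. fwd \<rho> P h s * r s a)
      + (\<Sum>y\<in>UNIV. \<gamma> ^ Suc \<tau> * mass (hext h a y) * (g (hext h a y) + A))
    = \<gamma> ^ \<tau> * mass h * (cond_reward \<rho> P r h a + \<gamma> * next_expect g h a + \<gamma> * A)"
proof -
  define m where "m y = mass (hext h a y)" for y
  have split: "(\<Sum>y\<in>UNIV. \<gamma> ^ Suc \<tau> * m y * (g (hext h a y) + A))
      = \<gamma> ^ Suc \<tau> * (\<Sum>y\<in>UNIV. m y * g (hext h a y)) + \<gamma> ^ Suc \<tau> * A * (\<Sum>y\<in>UNIV. m y)"
    by (simp add: distrib_left sum.distrib sum_distrib_left sum_distrib_right mult_ac)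
  have "(\<Sum>y\<in>UNIV. m y) = mass h"
    unfolding m_def by (rule sum_mass_hext)
  moreover have "(\<Sum>s\<in>UNIV. fwd \<rho> P h s * r s a) = mass h * cond_reward \<rho> P r h a"
    using assms by (simp add: cond_reward_eq)
  moreover have "(\<Sum>y\<in>UNIV. m y * g (hext h a y)) = mass h * next_expect g h a"
    using assms by (simp add: next_expect_def m_def)
  ultimately show ?thesis
    unfolding m_def[symmetric] split by (simp add: algebra_simps)
qed

lemma disc_ret_fwd_Suc_le:
  assumes \<pi>: "is_policy \<pi>" and \<gamma>: "0 \<le> \<gamma>" and pos: "0 < mass h"
    and IH: "\<And>a y. disc_ret P r \<gamma> \<pi> n (Suc \<tau>) (hext h a y) (fwd \<rho> P (hext h a y))
      \<le> \<gamma> ^ Suc \<tau> * mass (hext h a y) * (W (hext h a y) + A)"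
    and step: "\<And>a. \<pi> \<tau> h a \<noteq> 0 \<Longrightarrow> cond_reward \<rho> P r h a + \<gamma> * next_expect W h a \<le> V + E"
  shows "disc_ret P r \<gamma> \<pi> (Suc n) \<tau> h (fwd \<rho> P h) \<le> \<gamma> ^ \<tau> * mass h * (V + E + \<gamma> * A)"
proof -
  have "\<gamma> ^ \<tau> * (\<Sum>s\<in>UNIV. fwd \<rho> P h s * r s a)
      + (\<Sum>y\<in>UNIV. disc_ret P r \<gamma> \<pi> n (Suc \<tau>) (hext h a y) (fwd \<rho> P (hext h a y)))
    \<le> \<gamma> ^ \<tau> * mass h * (cond_reward \<rho> P r h a + \<gamma> * next_expect W h a + \<gamma> * A)" for a
    unfolding discounted_step_eq[OF pos, symmetric] using IH by (intro add_left_mono sum_mono)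
  also have "\<dots> a \<le> \<gamma> ^ \<tau> * mass h * (V + E + \<gamma> * A)" if "\<pi> \<tau> h a \<noteq> 0" for a
    using step[OF that] pos \<gamma> by (intro mult_left_mono) auto
  finally have "\<pi> \<tau> h a * (\<gamma> ^ \<tau> * (\<Sum>s\<in>UNIV. fwd \<rho> P h s * r s a)
        + (\<Sum>y\<in>UNIV. disc_ret P r \<gamma> \<pi> n (Suc \<tau>) (hext h a y) (fwd \<rho> P (hext h a y))))
      \<le> \<pi> \<tau> h a * (\<gamma> ^ \<tau> * mass h * (V + E + \<gamma> * A))" for a
    using is_policy_nonneg[OF \<pi>, of \<tau> h a] by (cases "\<pi> \<tau> h a = 0") (simp_all add: mult_left_mono)
  then have "disc_ret P r \<gamma> \<pi> (Suc n) \<tau> h (fwd \<rho> P h)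
      \<le> (\<Sum>a\<in>UNIV. \<pi> \<tau> h a * (\<gamma> ^ \<tau> * mass h * (V + E + \<gamma> * A)))"
    unfolding disc_ret_fwd_Suc by (rule sum_mono)
  also have "\<dots> = \<gamma> ^ \<tau> * mass h * (V + E + \<gamma> * A)"
    using is_policy_sum[OF \<pi>] by (simp flip: sum_distrib_right)
  finally show ?thesis .
qed

lemma disc_ret_fwd_le:
  assumes \<pi>: "is_policy \<pi>" and \<gamma>: "0 \<le> \<gamma>" and W_bound: "\<And>\<tau> h. \<bar>W \<tau> h\<bar> \<le> M"
    and step: "\<And>\<tau> h a. t \<le> \<tau> \<Longrightarrow> feasible \<rho> P \<tau> h \<Longrightarrow> \<pi> \<tau> h a \<noteq> 0 \<Longrightarrow>
      cond_reward \<rho> P r h a + \<gamma> * next_expect (W (Suc \<tau>)) h a \<le> W \<tau> h + E \<tau>"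
    and "t \<le> \<tau>" "hist_len h = \<tau>"
  shows "disc_ret P r \<gamma> \<pi> n \<tau> h (fwd \<rho> P h)
    \<le> \<gamma> ^ \<tau> * mass h * (W \<tau> h + (\<Sum>k<n. \<gamma> ^ k * E (\<tau> + k)) + \<gamma> ^ n * M)"
  using assms(5,6)
proof (induction n arbitrary: \<tau> h)
  case 0
  then show ?case
    using W_bound[of \<tau> h] \<gamma> mass_nonneg[of h] by (simp add: abs_le_iff)
next
  case (Suc n)
  define A where "A = (\<Sum>k<n. \<gamma> ^ k * E (Suc \<tau> + k)) + \<gamma> ^ n * M"
  have unfold_A: "W \<tau> h + E \<tau> + \<gamma> * A = W \<tau> h + (\<Sum>k<Suc n. \<gamma> ^ k * E (\<tau> + k)) + \<gamma> ^ Suc n * M"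
    unfolding A_def sum.lessThan_Suc_shift by (simp add: sum_distrib_left algebra_simps)
  have "disc_ret P r \<gamma> \<pi> (Suc n) \<tau> h (fwd \<rho> P h) \<le> \<gamma> ^ \<tau> * mass h * (W \<tau> h + E \<tau> + \<gamma> * A)"
  proof (cases "mass h = 0")
    case True
    then show ?thesis by (simp add: fwd_eq_0_if_mass_eq_0 disc_ret_zero del: disc_ret.simps)
  next
    case False
    then have "0 < mass h" by (simp add: less_le mass_nonneg)
    moreover have "feasible \<rho> P \<tau> h"
      using \<open>0 < mass h\<close> Suc.prems by (simp add: feasible_def)
    moreover have "disc_ret P r \<gamma> \<pi> n (Suc \<tau>) (hext h a y) (fwd \<rho> P (hext h a y))
        \<le> \<gamma> ^ Suc \<tau> * mass (hext h a y) * (W (Suc \<tau>) (hext h a y) + A)" for a y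
      using Suc.IH[of "Suc \<tau>" "hext h a y"] Suc.prems by (simp add: hist_len_hext A_def add.assoc)
    ultimately show ?thesis
      using Suc.prems step[of \<tau> h] by (intro disc_ret_fwd_Suc_le[OF \<pi> \<gamma>]) auto
  qed
  then show ?case
    unfolding unfold_A .
qed

lemma disc_ret_fwd_ge:
  assumes \<pi>: "is_policy \<pi>" and \<gamma>: "0 \<le> \<gamma>" and W_bound: "\<And>\<tau> h. \<bar>W \<tau> h\<bar> \<le> M"
    and step: "\<And>\<tau> h a. t \<le> \<tau> \<Longrightarrow> feasible \<rho> P \<tau> h \<Longrightarrow> \<pi> \<tau> h a \<noteq> 0 \<Longrightarrow>
      W \<tau> h - E \<tau> \<le> cond_reward \<rho> P r h a + \<gamma> * next_expect (W (Suc \<tau>)) h a"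
    and "t \<le> \<tau>" "hist_len h = \<tau>"
  shows "\<gamma> ^ \<tau> * mass h * (W \<tau> h - (\<Sum>k<n. \<gamma> ^ k * E (\<tau> + k)) - \<gamma> ^ n * M)
    \<le> disc_ret P r \<gamma> \<pi> n \<tau> h (fwd \<rho> P h)"
proof -
  have "disc_ret P (\<lambda>s a. - r s a) \<gamma> \<pi> n \<tau> h (fwd \<rho> P h)
      \<le> \<gamma> ^ \<tau> * mass h * (- W \<tau> h + (\<Sum>k<n. \<gamma> ^ k * E (\<tau> + k)) + \<gamma> ^ n * M)"
    using W_bound step assms(5,6)
    by (intro disc_ret_fwd_le[OF \<pi> \<gamma>, where W = "\<lambda>\<tau> h. - W \<tau> h"])
      (fastforce simp: cond_reward_uminus next_expect_uminus)+
  then show ?thesis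
    by (simp add: disc_ret_uminus_reward algebra_simps)
qed

lemma disc_ret_belief:
  assumes "0 < mass h"
  shows "disc_ret P r \<gamma> \<pi> n t h (belief \<rho> P h) = disc_ret P r \<gamma> \<pi> n t h (fwd \<rho> P h) / mass h"
proof -
  have "belief \<rho> P h = (\<lambda>s. (1 / mass h) * fwd \<rho> P h s)"
    by (simp add: belief_def fun_eq_iff)
  then show ?thesis
    by (simp only: disc_ret_scale) simp
qed

lemma disc_ret_tendsto_value_fun:
  assumes \<pi>: "is_policy \<pi>" and r: "\<And>s a. 0 \<le> r s a \<and> r s a \<le> R"
    and \<gamma>: "0 \<le> \<gamma>" "\<gamma> < 1" and h: "feasible \<rho> P t h"
  shows "(\<lambda>n. disc_ret P r \<gamma> \<pi> n t h (belief \<rho> P h)) \<longlonglongrightarrow> value_fun \<rho> P r \<gamma> \<pi> t h"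
proof -
  have pos: "0 < mass h" and len: "hist_len h = t"
    using h by (auto simp: feasible_def)
  have "0 \<le> R"
    using r order_trans by blast
  have "incseq (\<lambda>n. disc_ret P r \<gamma> \<pi> n t h (belief \<rho> P h))"
    using r \<gamma> by (intro incseq_SucI disc_ret_mono_horizon[OF \<pi>] P_nonneg belief_nonneg) auto
  moreover have "disc_ret P r \<gamma> \<pi> n t h (belief \<rho> P h) \<le> \<gamma> ^ t * (R / (1 - \<gamma>))" for n
  proof -
    have "cond_reward \<rho> P r h' a \<le> R" if "feasible \<rho> P \<tau> h'" for \<tau> h' a
      using abs_cond_reward_le[of r a R h'] r that by (auto simp: feasible_def abs_le_iff)
    then have "disc_ret P r \<gamma> \<pi> n t h (fwd \<rho> P h)
        \<le> \<gamma> ^ t * mass h * (0 + (\<Sum>k<n. \<gamma> ^ k * R) + \<gamma> ^ n * 0)"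
      by (intro disc_ret_fwd_le[OF \<pi> \<gamma>(1), where W = "\<lambda>_ _. 0"] order_refl len)
        (auto simp: next_expect_def)
    also have "\<dots> \<le> \<gamma> ^ t * mass h * (R / (1 - \<gamma>))"
      using sum_periodic_geometric_le[OF \<gamma>, of 1 "\<lambda>_. R"] \<open>0 \<le> R\<close> pos \<gamma>
      by (intro mult_left_mono) auto
    finally show ?thesis
      using pos by (simp add: disc_ret_belief pos_divide_le_eq mult_ac)
  qed
  ultimately obtain v where "(\<lambda>n. disc_ret P r \<gamma> \<pi> n t h (belief \<rho> P h)) \<longlonglongrightarrow> v"
    using incseq_convergent by blast
  then show ?thesis
    unfolding value_fun_def by (simp add: limI)
qed

lemma value_fun_le_of_approx_bellman:
  assumes \<pi>: "is_policy \<pi>" and r: "\<And>s a. 0 \<le> r s a \<and> r s a \<le> R"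
    and \<gamma>: "0 \<le> \<gamma>" "\<gamma> < 1" and W_bound: "\<And>\<tau> h. \<bar>W \<tau> h\<bar> \<le> M"
    and step: "\<And>\<tau> h a. t \<le> \<tau> \<Longrightarrow> feasible \<rho> P \<tau> h \<Longrightarrow> \<pi> \<tau> h a \<noteq> 0 \<Longrightarrow>
      cond_reward \<rho> P r h a + \<gamma> * next_expect (W (Suc \<tau>)) h a \<le> W \<tau> h + E \<tau>"
    and C: "\<And>n. (\<Sum>k<n. \<gamma> ^ k * E (t + k)) \<le> C" and h: "feasible \<rho> P t h"
  shows "value_fun \<rho> P r \<gamma> \<pi> t h \<le> \<gamma> ^ t * (W t h + C)"
proof -
  have pos: "0 < mass h" and len: "hist_len h = t"
    using h by (auto simp: feasible_def)
  have "disc_ret P r \<gamma> \<pi> n t h (belief \<rho> P h) \<le> \<gamma> ^ t * (W t h + C + \<gamma> ^ n * M)" for n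
  proof -
    have "disc_ret P r \<gamma> \<pi> n t h (fwd \<rho> P h)
        \<le> \<gamma> ^ t * mass h * (W t h + (\<Sum>k<n. \<gamma> ^ k * E (t + k)) + \<gamma> ^ n * M)"
      by (rule disc_ret_fwd_le[where W = W and E = E, OF \<pi> \<gamma>(1) W_bound step order_refl len])
    also have "\<dots> \<le> \<gamma> ^ t * mass h * (W t h + C + \<gamma> ^ n * M)"
      using C[of n] pos \<gamma> by (intro mult_left_mono) auto
    finally show ?thesis
      using pos by (simp add: disc_ret_belief pos_divide_le_eq mult_ac)
  qed
  moreover have "(\<lambda>n. \<gamma> ^ t * (W t h + C + \<gamma> ^ n * M)) \<longlonglongrightarrow> \<gamma> ^ t * (W t h + C + 0 * M)"
    using \<gamma> by (intro tendsto_intros LIMSEQ_power_zero) auto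
  ultimately show ?thesis
    using LIMSEQ_le[OF disc_ret_tendsto_value_fun[where r = r, OF \<pi> r \<gamma> h]] by auto
qed

lemma value_fun_ge_of_approx_bellman:
  assumes \<pi>: "is_policy \<pi>" and r: "\<And>s a. 0 \<le> r s a \<and> r s a \<le> R"
    and \<gamma>: "0 \<le> \<gamma>" "\<gamma> < 1" and W_bound: "\<And>\<tau> h. \<bar>W \<tau> h\<bar> \<le> M"
    and step: "\<And>\<tau> h a. t \<le> \<tau> \<Longrightarrow> feasible \<rho> P \<tau> h \<Longrightarrow> \<pi> \<tau> h a \<noteq> 0 \<Longrightarrow>
      W \<tau> h - E \<tau> \<le> cond_reward \<rho> P r h a + \<gamma> * next_expect (W (Suc \<tau>)) h a"
    and C: "\<And>n. (\<Sum>k<n. \<gamma> ^ k * E (t + k)) \<le> C" and h: "feasible \<rho> P t h"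
  shows "\<gamma> ^ t * (W t h - C) \<le> value_fun \<rho> P r \<gamma> \<pi> t h"
proof -
  have pos: "0 < mass h" and len: "hist_len h = t"
    using h by (auto simp: feasible_def)
  have "\<gamma> ^ t * (W t h - C - \<gamma> ^ n * M) \<le> disc_ret P r \<gamma> \<pi> n t h (belief \<rho> P h)" for n
  proof -
    have "\<gamma> ^ t * mass h * (W t h - C - \<gamma> ^ n * M)
        \<le> \<gamma> ^ t * mass h * (W t h - (\<Sum>k<n. \<gamma> ^ k * E (t + k)) - \<gamma> ^ n * M)"
      using C[of n] pos \<gamma> by (intro mult_left_mono) auto
    also have "\<dots> \<le> disc_ret P r \<gamma> \<pi> n t h (fwd \<rho> P h)"
      by (rule disc_ret_fwd_ge[where W = W and E = E, OF \<pi> \<gamma>(1) W_bound step order_refl len])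
    finally show ?thesis
      using pos by (simp add: disc_ret_belief pos_le_divide_eq mult_ac)
  qed
  moreover have "(\<lambda>n. \<gamma> ^ t * (W t h - C - \<gamma> ^ n * M)) \<longlonglongrightarrow> \<gamma> ^ t * (W t h - C - 0 * M)"
    using \<gamma> by (intro tendsto_intros LIMSEQ_power_zero) auto
  ultimately show ?thesis
    using LIMSEQ_le[OF _ disc_ret_tendsto_value_fun[where r = r, OF \<pi> r \<gamma> h]] by auto
qed

theorem opt_value_minus_value_fun_le:
  fixes q :: "nat \<Rightarrow> ('y, 'a) hist \<Rightarrow> 'a \<Rightarrow> real" and act :: "nat \<Rightarrow> ('y, 'a) hist \<Rightarrow> 'a"
  assumes r: "\<And>s a. 0 \<le> r s a \<and> r s a \<le> R"
    and \<gamma>: "0 \<le> \<gamma>" "\<gamma> < 1" and W_bound: "\<And>\<tau> h. \<bar>W \<tau> h\<bar> \<le> M"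
    and q_le: "\<And>\<tau> h a. q \<tau> h a \<le> W \<tau> h" and q_act: "\<And>\<tau> h. q \<tau> h (act \<tau> h) = W \<tau> h"
    and bellman: "\<And>\<tau> h a. t \<le> \<tau> \<Longrightarrow> feasible \<rho> P \<tau> h \<Longrightarrow>
      \<bar>cond_reward \<rho> P r h a + \<gamma> * next_expect (W (Suc \<tau>)) h a - q \<tau> h a\<bar> \<le> E \<tau>"
    and C: "\<And>n. (\<Sum>k<n. \<gamma> ^ k * E (t + k)) \<le> C" and h: "feasible \<rho> P t h"
  shows "opt_value \<rho> P r \<gamma> t h - value_fun \<rho> P r \<gamma> (\<lambda>\<tau> h a. if a = act \<tau> h then 1 else 0) t h
    \<le> 2 * \<gamma> ^ t * C"
proof -
  let ?greedy = "\<lambda>\<tau> h a. if a = act \<tau> h then 1 else 0 :: real"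
  have greedy: "is_policy ?greedy"
    by (simp add: is_policy_def)
  have upper: "cond_reward \<rho> P r h a + \<gamma> * next_expect (W (Suc \<tau>)) h a \<le> W \<tau> h + E \<tau>"
    if "t \<le> \<tau>" "feasible \<rho> P \<tau> h" for \<tau> h a
    using bellman[OF that, of a] q_le[of \<tau> h a] by linarith
  have lower: "W \<tau> h - E \<tau> \<le> cond_reward \<rho> P r h (act \<tau> h) + \<gamma> * next_expect (W (Suc \<tau>)) h (act \<tau> h)"
    if "t \<le> \<tau>" "feasible \<rho> P \<tau> h" for \<tau> h
    using bellman[OF that, of "act \<tau> h"] q_act[of \<tau> h] by linarith
  have "value_fun \<rho> P r \<gamma> \<pi> t h \<le> \<gamma> ^ t * (W t h + C)" if "is_policy \<pi>" for \<pi>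
    using that upper
    by (intro value_fun_le_of_approx_bellman[where W = W and E = E, OF _ r \<gamma> W_bound _ C h]) auto
  then have "opt_value \<rho> P r \<gamma> t h \<le> \<gamma> ^ t * (W t h + C)"
    unfolding opt_value_def using greedy by (intro cSUP_least) auto
  moreover have "\<gamma> ^ t * (W t h - C) \<le> value_fun \<rho> P r \<gamma> ?greedy t h"
    using lower
    by (intro value_fun_ge_of_approx_bellman[where W = W and E = E, OF greedy r \<gamma> W_bound _ C h])
      (auto split: if_splits)
  ultimately show ?thesis
    by (simp add: algebra_simps)
qed

subsection \<open>The agent-state approximation\<close>

lemma next_expect_agent_state:
  fixes V :: "'z::finite \<Rightarrow> real"
  assumes "0 < mass h"
  shows "next_expect (\<lambda>h'. V (agent_state \<phi> z0 a0 h')) h a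
    = (\<Sum>z'\<in>UNIV. next_agent_dist \<rho> P \<phi> z0 a0 h a z' * V z')"
proof -
  define z where "z = agent_state \<phi> z0 a0 h"
  define p where "p y = (\<Sum>s\<in>UNIV. belief \<rho> P h s * obs_prob P s a y)" for y
  define ind where "ind y z' = (if z' = \<phi> z y a then 1 else 0 :: real)" for y z'
  have "next_agent_dist \<rho> P \<phi> z0 a0 h a z'
      = (\<Sum>s\<in>UNIV. \<Sum>y\<in>UNIV. \<Sum>s'\<in>UNIV. belief \<rho> P h s * P s a s' y * ind y z')" for z'
    unfolding next_agent_dist_def z_def ind_def by (rule sum.cong[OF refl], rule sum.swap)
  also have "\<dots> z' = (\<Sum>y\<in>UNIV. p y * ind y z')" for z'
    by (subst sum.swap) (simp add: p_def obs_prob_def sum_distrib_left sum_distrib_right)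
  finally have "(\<Sum>z'\<in>UNIV. next_agent_dist \<rho> P \<phi> z0 a0 h a z' * V z')
      = (\<Sum>z'\<in>UNIV. \<Sum>y\<in>UNIV. p y * ind y z' * V z')"
    by (simp add: sum_distrib_right)
  also have "\<dots> = (\<Sum>y\<in>UNIV. p y * V (\<phi> z y a))"
    by (subst sum.swap) (simp add: ind_def if_distrib[where f = "\<lambda>x. _ * x * _"] cong: if_cong)
  also have "\<dots> = next_expect (\<lambda>h'. V (agent_state \<phi> z0 a0 h')) h a"
    using assms
    by (simp add: next_expect_def mass_hext p_def belief_def agent_state_hext z_def
        sum_distrib_left sum_divide_distrib mult_ac)
  finally show ?thesis ..
qed

lemma agent_state_bellman_error:
  fixes V :: "'z::finite \<Rightarrow> real"
  assumes zeta_cond: "\<And>s z. zeta_s_given_za \<zeta> l s z a = zeta_s_given_z \<zeta> l s z"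
    and q: "q = r_mu r \<zeta> l (agent_state \<phi> z0 a0 h) a
      + \<gamma> * (\<Sum>z'\<in>UNIV. P_mu P \<phi> \<zeta> l (agent_state \<phi> z0 a0 h) a z' * V z')"
    and \<gamma>: "0 \<le> \<gamma>" and \<tau>: "t \<le> \<tau>" "\<tau> mod L = l" "feasible \<rho> P \<tau> h"
    and eps: "eps_err \<rho> P r \<phi> z0 a0 L \<zeta> l t \<le> ereal e"
    and delta: "delta_err \<rho> P \<phi> z0 a0 L \<zeta> F l t \<le> ereal d"
    and mink: "minkowski F V \<le> ereal m"
  shows "\<bar>cond_reward \<rho> P r h a + \<gamma> * next_expect (\<lambda>h'. V (agent_state \<phi> z0 a0 h')) h a - q\<bar>
    \<le> e + \<gamma> * (d * m)"
proof -
  let ?N = "\<Sum>z'\<in>UNIV. next_agent_dist \<rho> P \<phi> z0 a0 h a z' * V z'"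
  let ?Pm = "\<Sum>z'\<in>UNIV. P_mu P \<phi> \<zeta> l (agent_state \<phi> z0 a0 h) a z' * V z'"
  have "\<bar>cond_reward \<rho> P r h a - r_mu r \<zeta> l (agent_state \<phi> z0 a0 h) a\<bar> \<le> e"
    using order_trans[OF reward_error_le_eps_err[where a = a, OF \<tau>] eps] zeta_cond
    by (simp add: r_mu_def)
  moreover have "\<bar>?N - ?Pm\<bar> \<le> d * m"
    using order_trans[OF ipm_le_delta_err[where a = a, OF \<tau>] delta]
    by (simp add: abs_sum_diff_le_ipm_mult_minkowski[OF _ mink] mult.commute)
  then have "\<bar>\<gamma> * ?N - \<gamma> * ?Pm\<bar> \<le> \<gamma> * (d * m)"
    using \<gamma> by (simp add: abs_mult mult_left_mono flip: right_diff_distrib)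
  moreover have "next_expect (\<lambda>h'. V (agent_state \<phi> z0 a0 h')) h a = ?N"
    using \<tau>(3) by (simp add: next_expect_agent_state feasible_def)
  ultimately show ?thesis
    unfolding q by (simp add: abs_le_iff)
qed

lemma eps_err_nonneg:
  assumes "1 \<le> t"
  shows "0 \<le> eps_err \<rho> P r \<phi> z0 a0 L \<zeta> (t mod L) t"
proof -
  fix a :: 'a
  obtain h where "feasible \<rho> P t h"
    using feasible_exists[OF assms] by blast
  then show ?thesis
    unfolding eps_err_def by (intro SUP_upper2[of t] SUP_upper2[of h] SUP_upper2[of a]) auto
qed

lemma eps_err_le:
  fixes \<phi> :: "'z::finite \<Rightarrow> 'y \<Rightarrow> 'a \<Rightarrow> 'z"
  assumes r: "\<And>s a. \<bar>r s a\<bar> \<le> R"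
  shows "eps_err \<rho> P r \<phi> z0 a0 L \<zeta> l t
    \<le> ereal (R + (\<Sum>z\<in>UNIV. \<Sum>a\<in>UNIV. \<bar>\<Sum>s\<in>UNIV. r s a * zeta_s_given_za \<zeta> l s z a\<bar>))"
  unfolding eps_err_def
proof (intro SUP_least)
  fix \<tau> h a
  assume "h \<in> {h. feasible \<rho> P \<tau> h}"
  then have cond: "\<bar>cond_reward \<rho> P r h a\<bar> \<le> R"
    using r by (intro abs_cond_reward_le) (auto simp: feasible_def)
  have zeta: "\<bar>\<Sum>s\<in>UNIV. r s a * zeta_s_given_za \<zeta> l s z a\<bar>
      \<le> (\<Sum>z\<in>UNIV. \<Sum>a\<in>UNIV. \<bar>\<Sum>s\<in>UNIV. r s a * zeta_s_given_za \<zeta> l s z a\<bar>)" for z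
  proof -
    have "\<bar>\<Sum>s\<in>UNIV. r s a * zeta_s_given_za \<zeta> l s z a\<bar>
        \<le> (\<Sum>a\<in>UNIV. \<bar>\<Sum>s\<in>UNIV. r s a * zeta_s_given_za \<zeta> l s z a\<bar>)"
      by (rule member_le_sum) auto
    also have "\<dots> \<le> (\<Sum>z\<in>UNIV. \<Sum>a\<in>UNIV. \<bar>\<Sum>s\<in>UNIV. r s a * zeta_s_given_za \<zeta> l s z a\<bar>)"
      by (rule member_le_sum[where f = "\<lambda>z. \<Sum>a\<in>UNIV. _ z a"]) (auto intro: sum_nonneg)
    finally show ?thesis .
  qed
  show "ereal \<bar>cond_reward \<rho> P r h a
      - (\<Sum>s\<in>UNIV. r s a * zeta_s_given_za \<zeta> l s (agent_state \<phi> z0 a0 h) a)\<bar>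
    \<le> ereal (R + (\<Sum>z\<in>UNIV. \<Sum>a\<in>UNIV. \<bar>\<Sum>s\<in>UNIV. r s a * zeta_s_given_za \<zeta> l s z a\<bar>))"
    using abs_triangle_ineq4[of "cond_reward \<rho> P r h a"] cond zeta[of "agent_state \<phi> z0 a0 h"]
    by (simp only: ereal_less_eq(3))
qed

lemma delta_err_nonneg:
  assumes "1 \<le> t" "F \<noteq> {}"
  shows "0 \<le> delta_err \<rho> P \<phi> z0 a0 L \<zeta> F (t mod L) t"
proof -
  fix a :: 'a
  obtain h where "feasible \<rho> P t h"
    using feasible_exists[OF assms(1)] by blast
  then show ?thesis
    unfolding delta_err_def using ipm_nonneg[OF assms(2)]
    by (intro SUP_upper2[of t] SUP_upper2[of h] SUP_upper2[of a]) auto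
qed

lemma periodic_agent_state_bellman_error:
  assumes L: "0 < L" and \<gamma>: "0 \<le> \<gamma>"
    and zeta_cond: "\<And>l s z a. l < L \<Longrightarrow> zeta_s_given_za \<zeta> l s z a = zeta_s_given_z \<zeta> l s z"
    and Q_fix: "\<And>l z a. l < L \<Longrightarrow>
      Q l z a = r_mu r \<zeta> l z a + \<gamma> * (\<Sum>z'\<in>UNIV. P_mu P \<phi> \<zeta> l z a z' * V_mu Q (Suc l mod L) z')"
    and eps: "\<And>j. j < L \<Longrightarrow> eps_err \<rho> P r \<phi> z0 a0 L \<zeta> ((t + j) mod L) (t + j) \<le> ereal (e j)"
    and delta: "\<And>j. j < L \<Longrightarrow> delta_err \<rho> P \<phi> z0 a0 L \<zeta> F ((t + j) mod L) (t + j) \<le> ereal (d j)"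
    and mink: "\<And>j. j < L \<Longrightarrow> minkowski F (V_mu Q ((t + j + 1) mod L)) \<le> ereal (m j)"
    and \<tau>: "t \<le> \<tau>" "feasible \<rho> P \<tau> h"
  shows "\<bar>cond_reward \<rho> P r h a
      + \<gamma> * next_expect (\<lambda>h'. V_mu Q (Suc \<tau> mod L) (agent_state \<phi> z0 a0 h')) h a
      - Q (\<tau> mod L) (agent_state \<phi> z0 a0 h) a\<bar>
    \<le> e ((\<tau> - t) mod L) + \<gamma> * (d ((\<tau> - t) mod L) * m ((\<tau> - t) mod L))"
proof -
  define j where "j = (\<tau> - t) mod L"
  have j: "j < L" "t + j \<le> \<tau>" "(t + j) mod L = \<tau> mod L"
    using L \<tau>(1) mod_less_eq_dividend[of "\<tau> - t" L] unfolding j_def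
    by (simp, linarith, simp add: mod_add_right_eq)
  have next_index: "(t + j + 1) mod L = Suc (\<tau> mod L) mod L" "Suc \<tau> mod L = Suc (\<tau> mod L) mod L"
    using j(3) by (metis Suc_eq_plus1 mod_Suc_eq) (rule mod_Suc_eq[symmetric])
  show ?thesis
    unfolding j_def[symmetric] next_index(2)
    using L \<gamma> j \<tau>(2) eps[OF j(1)] delta[OF j(1)] mink[OF j(1)] next_index(1)
    by (intro agent_state_bellman_error[where l = "\<tau> mod L" and t = "t + j"])
      (simp_all add: zeta_cond Q_fix)
qed

theorem hist_policy_of_gap_le_of_error_bounds:
  assumes r: "\<And>s a. 0 \<le> r s a \<and> r s a \<le> R" and \<gamma>: "0 \<le> \<gamma>" "\<gamma> < 1" and L: "0 < L"
    and zeta_cond: "\<And>l s z a. l < L \<Longrightarrow> zeta_s_given_za \<zeta> l s z a = zeta_s_given_z \<zeta> l s z"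
    and Q_fix: "\<And>l z a. l < L \<Longrightarrow>
      Q l z a = r_mu r \<zeta> l z a + \<gamma> * (\<Sum>z'\<in>UNIV. P_mu P \<phi> \<zeta> l z a z' * V_mu Q (Suc l mod L) z')"
    and pi_argmax: "\<And>l z. l < L \<Longrightarrow> Q l z (\<pi>\<mu> l z) = V_mu Q l z"
    and eps: "\<And>j. j < L \<Longrightarrow> eps_err \<rho> P r \<phi> z0 a0 L \<zeta> ((t + j) mod L) (t + j) \<le> ereal (e j)"
    and delta: "\<And>j. j < L \<Longrightarrow> delta_err \<rho> P \<phi> z0 a0 L \<zeta> F ((t + j) mod L) (t + j) \<le> ereal (d j)"
    and mink: "\<And>j. j < L \<Longrightarrow> minkowski F (V_mu Q ((t + j + 1) mod L)) \<le> ereal (m j)"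
    and err_nonneg: "\<And>j. j < L \<Longrightarrow> 0 \<le> e j + \<gamma> * (d j * m j)"
    and h: "feasible \<rho> P t h"
  shows "opt_value \<rho> P r \<gamma> t h - value_fun \<rho> P r \<gamma> (hist_policy_of \<phi> z0 a0 L \<pi>\<mu>) t h
    \<le> 2 * \<gamma> ^ t * ((\<Sum>l<L. \<gamma> ^ l * (e l + \<gamma> * (d l * m l))) / (1 - \<gamma> ^ L))"
proof -
  let ?W = "\<lambda>\<tau> h. V_mu Q (\<tau> mod L) (agent_state \<phi> z0 a0 h)"
  let ?q = "\<lambda>\<tau> h. Q (\<tau> mod L) (agent_state \<phi> z0 a0 h)"
  let ?act = "\<lambda>\<tau> h. \<pi>\<mu> (\<tau> mod L) (agent_state \<phi> z0 a0 h)"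
  define E where "E \<tau> = e ((\<tau> - t) mod L) + \<gamma> * (d ((\<tau> - t) mod L) * m ((\<tau> - t) mod L))" for \<tau>
  have W_bound: "\<bar>?W \<tau> h\<bar> \<le> (\<Sum>l<L. \<Sum>z\<in>UNIV. \<bar>V_mu Q l z\<bar>)" for \<tau> h
    using L by (intro order_trans[OF member_le_sum member_le_sum[where f = "\<lambda>l. \<Sum>z\<in>UNIV. _ l z"]])
      (auto intro: sum_nonneg)
  have bellman: "\<bar>cond_reward \<rho> P r h a + \<gamma> * next_expect (?W (Suc \<tau>)) h a - ?q \<tau> h a\<bar> \<le> E \<tau>"
    if "t \<le> \<tau>" "feasible \<rho> P \<tau> h" for \<tau> h a
    unfolding E_def
    by (rule periodic_agent_state_bellman_error[OF L \<gamma>(1) zeta_cond Q_fix eps delta mink that])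
  have sums: "(\<Sum>k<n. \<gamma> ^ k * E (t + k))
      \<le> (\<Sum>l<L. \<gamma> ^ l * (e l + \<gamma> * (d l * m l))) / (1 - \<gamma> ^ L)" for n
    using sum_periodic_geometric_le[OF \<gamma> L err_nonneg] by (simp add: E_def)
  have greedy: "?q \<tau> h (?act \<tau> h) = ?W \<tau> h" for \<tau> h
    using pi_argmax L by simp
  have "hist_policy_of \<phi> z0 a0 L \<pi>\<mu> = (\<lambda>\<tau> h a. if a = ?act \<tau> h then 1 else 0)"
    by (simp add: fun_eq_iff hist_policy_of_def)
  then show ?thesis
    using opt_value_minus_value_fun_le[where W = ?W and q = ?q and act = ?act and E = E,
        OF r \<gamma> W_bound Q_le_V_mu greedy bellman sums h]
    by simp
qed

theorem hist_policy_of_gap_le: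
  assumes r: "\<And>s a. 0 \<le> r s a \<and> r s a \<le> R" and \<gamma>: "0 \<le> \<gamma>" "\<gamma> < 1" and L: "0 < L"
    and zeta_cond: "\<And>l s z a. l < L \<Longrightarrow> zeta_s_given_za \<zeta> l s z a = zeta_s_given_z \<zeta> l s z"
    and Q_fix: "\<And>l z a. l < L \<Longrightarrow>
      Q l z a = r_mu r \<zeta> l z a + \<gamma> * (\<Sum>z'\<in>UNIV. P_mu P \<phi> \<zeta> l z a z' * V_mu Q (Suc l mod L) z')"
    and pi_argmax: "\<And>l z. l < L \<Longrightarrow> Q l z (\<pi>\<mu> l z) = V_mu Q l z"
    and fin: "\<forall>l<L. delta_err \<rho> P \<phi> z0 a0 L \<zeta> F ((t + l) mod L) (t + l) \<noteq> \<infinity>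
      \<and> minkowski F (V_mu Q ((t + l + 1) mod L)) \<noteq> \<infinity>"
    and h: "feasible \<rho> P t h"
  shows "ereal (opt_value \<rho> P r \<gamma> t h - value_fun \<rho> P r \<gamma> (hist_policy_of \<phi> z0 a0 L \<pi>\<mu>) t h)
    \<le> ereal (2 / (1 - \<gamma> ^ L)) *
       (\<Sum>l<L. ereal (\<gamma> ^ l) *
          (eps_err \<rho> P r \<phi> z0 a0 L \<zeta> ((t + l) mod L) (t + l)
           + ereal \<gamma> * delta_err \<rho> P \<phi> z0 a0 L \<zeta> F ((t + l) mod L) (t + l)
             * minkowski F (V_mu Q ((t + l + 1) mod L))))"
proof -
  have t: "1 \<le> t"
    using h by (simp add: feasible_def hist_len_def)
  define e where "e j = real_of_ereal (eps_err \<rho> P r \<phi> z0 a0 L \<zeta> ((t + j) mod L) (t + j))" for j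
  define d where "d j = real_of_ereal (delta_err \<rho> P \<phi> z0 a0 L \<zeta> F ((t + j) mod L) (t + j))" for j
  define m where "m j = real_of_ereal (minkowski F (V_mu Q ((t + j + 1) mod L)))" for j
  have eps: "eps_err \<rho> P r \<phi> z0 a0 L \<zeta> ((t + j) mod L) (t + j) = ereal (e j) \<and> 0 \<le> e j" for j
  proof -
    have "eps_err \<rho> P r \<phi> z0 a0 L \<zeta> ((t + j) mod L) (t + j)
        \<le> ereal (R + (\<Sum>z\<in>UNIV. \<Sum>a\<in>UNIV. \<bar>\<Sum>s\<in>UNIV. r s a * zeta_s_given_za \<zeta> ((t + j) mod L) s z a\<bar>))"
      using r by (intro eps_err_le) auto
    then show ?thesis
      using eps_err_nonneg[of "t + j" r \<phi> z0 a0 L \<zeta>] t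
      unfolding e_def by (cases "eps_err \<rho> P r \<phi> z0 a0 L \<zeta> ((t + j) mod L) (t + j)") auto
  qed
  have "F \<noteq> {}"
    using fin L nonempty_if_minkowski_finite by blast
  then have delta: "delta_err \<rho> P \<phi> z0 a0 L \<zeta> F ((t + j) mod L) (t + j) = ereal (d j) \<and> 0 \<le> d j"
    if "j < L" for j
    using delta_err_nonneg[of "t + j" F \<phi> z0 a0 L \<zeta>] fin that t
    unfolding d_def by (cases "delta_err \<rho> P \<phi> z0 a0 L \<zeta> F ((t + j) mod L) (t + j)") auto
  have mink: "minkowski F (V_mu Q ((t + j + 1) mod L)) = ereal (m j) \<and> 0 \<le> m j" if "j < L" for j
    using minkowski_nonneg[of F "V_mu Q ((t + j + 1) mod L)"] fin that
    unfolding m_def by (cases "minkowski F (V_mu Q ((t + j + 1) mod L))") auto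
  have err_nonneg: "0 \<le> e j + \<gamma> * (d j * m j)" if "j < L" for j
    using eps delta mink \<gamma> that by simp
  define C where "C = (\<Sum>l<L. \<gamma> ^ l * (e l + \<gamma> * (d l * m l))) / (1 - \<gamma> ^ L)"
  have "0 \<le> C"
    unfolding C_def using err_nonneg \<gamma>
    by (intro divide_nonneg_nonneg sum_nonneg mult_nonneg_nonneg) (auto simp: power_le_one)
  then have "\<gamma> ^ t * C \<le> C"
    using \<gamma> by (simp add: mult_left_le_one_le power_le_one)
  then have "opt_value \<rho> P r \<gamma> t h - value_fun \<rho> P r \<gamma> (hist_policy_of \<phi> z0 a0 L \<pi>\<mu>) t h \<le> 2 * C"
    using hist_policy_of_gap_le_of_error_bounds[OF r \<gamma> L zeta_cond Q_fix pi_argmax eps[THEN conjunct1, THEN eq_refl]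
        delta[THEN conjunct1, THEN eq_refl] mink[THEN conjunct1, THEN eq_refl] err_nonneg h]
    unfolding C_def by linarith
  then show ?thesis
    using eps delta mink by (simp add: C_def mult.assoc)
qed

end

theorem theorem2:
  fixes \<rho> :: "'s::finite \<Rightarrow> 'y::finite \<Rightarrow> real"
    and P :: "'s \<Rightarrow> 'a::finite \<Rightarrow> 's \<Rightarrow> 'y \<Rightarrow> real"
    and r :: "'s \<Rightarrow> 'a \<Rightarrow> real"
    and Rmax \<gamma> :: real
    and \<phi> :: "'z::finite \<Rightarrow> 'y \<Rightarrow> 'a \<Rightarrow> 'z" and z0 :: 'z and a0 :: 'a
    and L :: nat
    and \<mu> :: "nat \<Rightarrow> 'z \<Rightarrow> 'a \<Rightarrow> real"
    and \<zeta> :: "nat \<Rightarrow> 's \<Rightarrow> 'y \<Rightarrow> 'z \<Rightarrow> 'a \<Rightarrow> real"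
    and Q :: "nat \<Rightarrow> 'z \<Rightarrow> 'a \<Rightarrow> real"
    and \<pi>\<mu> :: "nat \<Rightarrow> 'z \<Rightarrow> 'a"
    and F :: "('z \<Rightarrow> real) set"
    and t :: nat
  assumes rho_nonneg: "\<forall>s y. 0 \<le> \<rho> s y"
    and rho_sum: "(\<Sum>s\<in>UNIV. \<Sum>y\<in>UNIV. \<rho> s y) = 1"
    and P_nonneg: "\<forall>s a s' y'. 0 \<le> P s a s' y'"
    and P_sum: "\<forall>s a. (\<Sum>s'\<in>UNIV. \<Sum>y'\<in>UNIV. P s a s' y') = 1"
    and r_bounds: "\<forall>s a. 0 \<le> r s a \<and> r s a \<le> Rmax"
    and gamma: "0 \<le> \<gamma>" "\<gamma> < 1"
    and L_pos: "1 \<le> L"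
    and mu_policy: "\<forall>l<L. \<forall>z. (\<forall>a. 0 \<le> \<mu> l z a) \<and> (\<Sum>a\<in>UNIV. \<mu> l z a) = 1"
    and conv: "\<forall>l<L. \<forall>s y z a.
       (\<lambda>k. chain_law \<rho> P \<phi> z0 a0 L \<mu> (l + k * L) s y z a) \<longlonglongrightarrow> \<zeta> l s y z a"
    and zeta_pos: "\<forall>l<L. \<forall>z a. (\<Sum>s\<in>UNIV. \<Sum>y\<in>UNIV. \<zeta> l s y z a) > 0"
    and Q_fix: "\<forall>l<L. \<forall>z a. Q l z a = r_mu r \<zeta> l z a
       + \<gamma> * (\<Sum>z'\<in>UNIV. P_mu P \<phi> \<zeta> l z a z' * V_mu Q (Suc l mod L) z')"
    and pi_argmax: "\<forall>l<L. \<forall>z. Q l z (\<pi>\<mu> l z) = V_mu Q l z"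
    and F_cb: "conv_balanced F"
    and t_pos: "1 \<le> t"
  shows "(\<forall>l<L. delta_err \<rho> P \<phi> z0 a0 L \<zeta> F ((t + l) mod L) (t + l) \<noteq> \<infinity>
              \<and> minkowski F (V_mu Q ((t + l + 1) mod L)) \<noteq> \<infinity>) \<longrightarrow>
    (SUP h\<in>{h. feasible \<rho> P t h}.
        ereal (opt_value \<rho> P r \<gamma> t h - value_fun \<rho> P r \<gamma> (hist_policy_of \<phi> z0 a0 L \<pi>\<mu>) t h))
    \<le> ereal (2 / (1 - \<gamma> ^ L)) *
       (\<Sum>l<L. ereal (\<gamma> ^ l) *
          (eps_err \<rho> P r \<phi> z0 a0 L \<zeta> ((t + l) mod L) (t + l)
           + ereal \<gamma> * delta_err \<rho> P \<phi> z0 a0 L \<zeta> F ((t + l) mod L) (t + l)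
             * minkowski F (V_mu Q ((t + l + 1) mod L))))"
proof -
  interpret pomdp \<rho> P
    using rho_nonneg rho_sum P_nonneg P_sum by unfold_locales auto
  have L: "0 < L"
    using L_pos by simp
  have zeta_cond: "zeta_s_given_za \<zeta> l s z a = zeta_s_given_z \<zeta> l s z" if "l < L" for l s z a
  proof (rule zeta_s_given_za_eq_of_limit[OF L that])
    show "(\<Sum>a\<in>UNIV. \<mu> l z a) = 1" for z
      using mu_policy that by blast
    show "(\<lambda>k. chain_law \<rho> P \<phi> z0 a0 L \<mu> (l + k * L) s y z a) \<longlonglongrightarrow> \<zeta> l s y z a" for s y z a
      using conv that by blast
    show "0 < (\<Sum>s\<in>UNIV. \<Sum>y\<in>UNIV. \<zeta> l s y z a)" for z a
      using zeta_pos that by blast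
  qed
  show ?thesis
    using hist_policy_of_gap_le[OF r_bounds[rule_format] gamma L zeta_cond Q_fix[rule_format]
        pi_argmax[rule_format]]
    by (auto intro: SUP_least)
qed

end
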